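(* Fix constants $c>0$, $g>0$, $A>0$, $Q\in\mathbb{R}$ and $\widetilde Z\in\mathbb{R}$, and set $U=Q/A$. For positive integrable functions $f:\mathbb{R}\to(0,\infty)$ define the kinetic energy functional $$\mathcal E(f)=\int_{\mathbb{R}}\left(\frac{\xi^2}{2}f(\xi)+c^2f(\xi)\log f(\xi)+c^2 f(\xi)\log\!\big(c\sqrt{2\pi}\big)+g\widetilde Z f(\xi)\right)d\xi .$$ Consider the minimization problem $\min\mathcal E(f)$ under the constraints $$f>0,\qquad \int_{\mathbb{R}}f(\xi)\,d\xi=A,\qquad \int_{\mathbb{R}}\xi f(\xi)\,d\xi=Q .$$ Then the minimum is attained (a.e.) by the function $$\mathcal M(\xi)=\frac{A}{c}\,\chi\!\left(\frac{\xi-U}{c}\right),\qquad \chi(w)=\frac{1}{\sqrt{2\pi}}\exp\!\left(-\frac{w^2}{2}\right),$$ and the minimal energy is $$\mathcal E(\mathcal M)=\frac{Q^2}{2A}+c^2A\ln A+gA\widetilde Z .$$ Moreover, if $A=A(X)>0$ and $\widetilde Z=\widetilde Z(X)$ depend (smoothly) on $X$ and form a still water steady state, i.e. $Q=0$ (so $U=0$) and $c^2\ln A(X)+g\widetilde Z(X)$ is constant in $X$, then $\mathcal M(X,\xi)=\frac{A(X)}{c}\chi\!\left(\frac{\xi}{c}\right)$ satisfies $$\xi\,\partial_X\mathcal M-g\,\partial_X\widetilde Z\,\partial_\xi\mathcal M=0 .$$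
   Context: Here $A$ is the equivalent wet area, $Q$ the equivalent discharge, $c$ the sonic speed, $g$ gravity and $\widetilde Z$ the pseudo-altitude of a pressurised pipe-flow model $\partial_tA+\partial_XQ=0$, $\partial_tQ+\partial_X(Q^2/A+c^2A)+g\partial_X\widetilde Z=0$. A still water steady state of this model is a state with $U=Q/A=0$ and $c^2\ln A+g\widetilde Z=\text{const}$. $\log$ and $\ln$ denote the natural logarithm. *)

theory Defs
  imports "HOL-Analysis.Analysis"
begin

definition chi :: "real \<Rightarrow> real" where
  "chi w = exp (- (w ^ 2) / 2) / sqrt (2 * pi)"

definition maxwellian :: "real \<Rightarrow> real \<Rightarrow> real \<Rightarrow> real \<Rightarrow> real" where
  "maxwellian c A U \<xi> = A / c * chi ((\<xi> - U) / c)"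

definition energy_density :: "real \<Rightarrow> real \<Rightarrow> real \<Rightarrow> (real \<Rightarrow> real) \<Rightarrow> real \<Rightarrow> real" where
  "energy_density c g Z f \<xi> =
     \<xi>\<^sup>2 / 2 * f \<xi> + c\<^sup>2 * f \<xi> * ln (f \<xi>) + c\<^sup>2 * f \<xi> * ln (c * sqrt (2 * pi)) + g * Z * f \<xi>"

definition energy :: "real \<Rightarrow> real \<Rightarrow> real \<Rightarrow> (real \<Rightarrow> real) \<Rightarrow> real" where
  "energy c g Z f = (\<integral>\<xi>. energy_density c g Z f \<xi> \<partial>lborel)"

end

theory Submission
  imports Defs "HOL-Probability.Probability"
begin

text \<open>Since \<open>ln \<M> = ln A - ln (c sqrt(2\<pi>)) - (\<xi> - U)\<^sup>2/(2c\<^sup>2)\<close>, the energy density of the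
  Maxwellian \<open>\<M>\<close> is \<open>\<M>\<close> times an affine function of \<open>\<xi>\<close>, and Gibbs' inequality
  \<open>f ln \<M> - f ln f \<le> \<M> - f\<close> bounds the density of any competitor \<open>f\<close> from below by
  \<open>c\<^sup>2 (f - \<M>)\<close> plus the same affine function times \<open>f\<close>. Integrating, the mass and momentum
  constraints make the integral of this lower bound equal to \<open>\<E>(\<M>)\<close>, namely \<open>U Q + (c\<^sup>2 ln A + g Z - U\<^sup>2/2) A\<close>.
  For the still water statement, \<open>\<partial>\<^sub>X \<M> = (\<partial>\<^sub>X A / A) \<M>\<close>,
  \<open>g \<partial>\<^sub>X Z = -c\<^sup>2 \<partial>\<^sub>X A / A\<close> and \<open>\<partial>\<^sub>\<xi> \<M> = -(\<xi>/c\<^sup>2) \<M>\<close>, so the two terms cancel.\<close>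

lemma ln_diff_le_diff:
  fixes x y :: real
  assumes "x > 0" "y > 0"
  shows "x * (ln y - ln x) \<le> y - x"
proof -
  have "ln (y / x) \<le> y / x - 1"
    using assms by (intro ln_le_minus_one) simp
  then have "x * ln (y / x) \<le> x * (y / x - 1)"
    using assms by (simp add: mult_left_mono)
  then show ?thesis
    using assms by (simp add: ln_div right_diff_distrib)
qed

lemma maxwellian_eq_normal_density:
  assumes "c > 0"
  shows "maxwellian c A U \<xi> = A * normal_density U c \<xi>"
proof -
  have "sqrt (2 * pi * c\<^sup>2) = c * sqrt (2 * pi)"
    using assms by (simp add: real_sqrt_mult)
  moreover have "((\<xi> - U) / c)\<^sup>2 / 2 = (\<xi> - U)\<^sup>2 / (2 * c\<^sup>2)"
    by (simp add: power_divide)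
  ultimately show ?thesis
    unfolding maxwellian_def chi_def normal_density_def by (simp add: field_simps)
qed

lemma maxwellian_pos: "c > 0 \<Longrightarrow> A > 0 \<Longrightarrow> maxwellian c A U \<xi> > 0"
  by (simp add: maxwellian_eq_normal_density normal_density_pos)

lemma ln_maxwellian:
  assumes "c > 0" "A > 0"
  shows "ln (maxwellian c A U \<xi>) = ln A - ln (c * sqrt (2 * pi)) - (\<xi> - U)\<^sup>2 / (2 * c\<^sup>2)"
proof -
  have "maxwellian c A U \<xi> = A / (c * sqrt (2 * pi)) * exp (- (\<xi> - U)\<^sup>2 / (2 * c\<^sup>2))"
    unfolding maxwellian_def chi_def by (simp add: power_divide field_simps)
  then show ?thesis
    using assms by (simp add: ln_mult ln_div)
qed

lemma
  assumes "c > 0"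
  shows integrable_maxwellian: "integrable lborel (maxwellian c A U)"
    and integral_maxwellian: "(\<integral>\<xi>. maxwellian c A U \<xi> \<partial>lborel) = A"
    and integrable_maxwellian_moment_1: "integrable lborel (\<lambda>\<xi>. \<xi> * maxwellian c A U \<xi>)"
    and integral_maxwellian_moment_1: "(\<integral>\<xi>. \<xi> * maxwellian c A U \<xi> \<partial>lborel) = A * U"
proof -
  have M: "maxwellian c A U = (\<lambda>\<xi>. A * normal_density U c \<xi>)"
    using maxwellian_eq_normal_density[OF assms] by auto
  have M1: "(\<lambda>\<xi>. \<xi> * maxwellian c A U \<xi>) = (\<lambda>\<xi>. A * (normal_density U c \<xi> * \<xi>))"
    using maxwellian_eq_normal_density[OF assms] by (auto simp: fun_eq_iff)
  show "integrable lborel (maxwellian c A U)"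
    unfolding M using integrable_normal_density[OF assms] by simp
  show "(\<integral>\<xi>. maxwellian c A U \<xi> \<partial>lborel) = A"
    unfolding M using integral_normal_density[OF assms] by simp
  show "integrable lborel (\<lambda>\<xi>. \<xi> * maxwellian c A U \<xi>)"
    unfolding M1 using integrable_normal_moment_nz_1[OF assms] by simp
  show "(\<integral>\<xi>. \<xi> * maxwellian c A U \<xi> \<partial>lborel) = A * U"
    unfolding M1 using integral_normal_moment_nz_1[OF assms] by simp
qed

lemma energy_density_maxwellian:
  assumes "c > 0" "A > 0"
  shows "energy_density c g Z (maxwellian c A U) \<xi>
    = U * (\<xi> * maxwellian c A U \<xi>) + (c\<^sup>2 * ln A + g * Z - U\<^sup>2 / 2) * maxwellian c A U \<xi>"
  unfolding energy_density_def ln_maxwellian[OF assms]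
  using assms by (simp add: field_simps power2_eq_square)

lemma energy_density_ge:
  assumes "c > 0" "A > 0" "f \<xi> > 0"
  shows "c\<^sup>2 * (f \<xi> - maxwellian c A U \<xi>) + U * (\<xi> * f \<xi>) + (c\<^sup>2 * ln A + g * Z - U\<^sup>2 / 2) * f \<xi>
    \<le> energy_density c g Z f \<xi>"
proof -
  let ?M = "maxwellian c A U \<xi>"
  have gibbs: "f \<xi> * (ln ?M - ln (f \<xi>)) \<le> ?M - f \<xi>"
    using ln_diff_le_diff assms maxwellian_pos by blast
  have "energy_density c g Z f \<xi>
      - (c\<^sup>2 * (f \<xi> - ?M) + U * (\<xi> * f \<xi>) + (c\<^sup>2 * ln A + g * Z - U\<^sup>2 / 2) * f \<xi>)
    = c\<^sup>2 * ((?M - f \<xi>) - f \<xi> * (ln ?M - ln (f \<xi>)))"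
    unfolding energy_density_def ln_maxwellian[OF assms(1,2)]
    using assms by (simp add: field_simps power2_eq_square)
  also have "\<dots> \<ge> 0"
    using gibbs by simp
  finally show ?thesis by simp
qed

lemma energy_maxwellian:
  assumes "c > 0" "A > 0"
  shows "integrable lborel (energy_density c g Z (maxwellian c A U))"
    and "energy c g Z (maxwellian c A U) = U * (A * U) + (c\<^sup>2 * ln A + g * Z - U\<^sup>2 / 2) * A"
proof -
  have E: "energy_density c g Z (maxwellian c A U) = (\<lambda>\<xi>.
      U * (\<xi> * maxwellian c A U \<xi>) + (c\<^sup>2 * ln A + g * Z - U\<^sup>2 / 2) * maxwellian c A U \<xi>)"
    using energy_density_maxwellian[OF assms] by (simp add: fun_eq_iff)
  show "integrable lborel (energy_density c g Z (maxwellian c A U))"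
    unfolding E using integrable_maxwellian[OF assms(1)] integrable_maxwellian_moment_1[OF assms(1)]
    by simp
  show "energy c g Z (maxwellian c A U) = U * (A * U) + (c\<^sup>2 * ln A + g * Z - U\<^sup>2 / 2) * A"
    unfolding energy_def E
    using integrable_maxwellian[OF assms(1)] integral_maxwellian[OF assms(1)]
      integrable_maxwellian_moment_1[OF assms(1)] integral_maxwellian_moment_1[OF assms(1)]
    by simp
qed

lemma energy_maxwellian_le:
  assumes "c > 0" "A > 0" "\<And>\<xi>. f \<xi> > 0"
    and "integrable lborel f" "integrable lborel (\<lambda>\<xi>. \<xi> * f \<xi>)"
    and "integrable lborel (energy_density c g Z f)"
    and "(\<integral>\<xi>. f \<xi> \<partial>lborel) = A" "(\<integral>\<xi>. \<xi> * f \<xi> \<partial>lborel) = A * U"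
  shows "energy c g Z (maxwellian c A U) \<le> energy c g Z f"
proof -
  let ?C = "c\<^sup>2 * ln A + g * Z - U\<^sup>2 / 2"
  let ?h = "\<lambda>\<xi>. c\<^sup>2 * (f \<xi> - maxwellian c A U \<xi>) + U * (\<xi> * f \<xi>) + ?C * f \<xi>"
  have M: "integrable lborel (maxwellian c A U)" "(\<integral>\<xi>. maxwellian c A U \<xi> \<partial>lborel) = A"
    using integrable_maxwellian[OF assms(1)] integral_maxwellian[OF assms(1)] .
  have h: "integrable lborel ?h"
    using assms(4,5) M(1) by simp
  have "energy c g Z (maxwellian c A U) = (\<integral>\<xi>. ?h \<xi> \<partial>lborel)"
    using assms(4,5,7,8) M by (simp add: energy_maxwellian(2)[OF assms(1,2)])
  also have "\<dots> \<le> energy c g Z f"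
    unfolding energy_def
    using h assms(6) energy_density_ge[where f = f, OF assms(1,2,3)] by (rule integral_mono)
  finally show ?thesis .
qed

lemma chi_has_real_derivative: "(chi has_real_derivative (- w * chi w)) (at w)"
  unfolding chi_def by (auto intro!: derivative_eq_intros simp: field_simps)

lemma maxwellian_has_real_derivative_velocity:
  assumes "c \<noteq> 0"
  shows "((\<lambda>\<xi>. maxwellian c A U \<xi>) has_real_derivative
           (U - \<xi>) / c\<^sup>2 * maxwellian c A U \<xi>) (at \<xi>)"
proof -
  have "((\<lambda>\<xi>. A / c * chi ((\<xi> - U) / c)) has_real_derivative
          A / c * (- ((\<xi> - U) / c) * chi ((\<xi> - U) / c) * (1 / c))) (at \<xi>)"
    using assms
    by (intro DERIV_cmult DERIV_chain2[OF chi_has_real_derivative])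
      (auto intro!: derivative_eq_intros)
  moreover have "A / c * (- ((\<xi> - U) / c) * chi ((\<xi> - U) / c) * (1 / c))
      = (U - \<xi>) / c\<^sup>2 * maxwellian c A U \<xi>"
    unfolding maxwellian_def by (simp add: power2_eq_square field_simps) (simp add: minus_divide_left)
  ultimately show ?thesis
    unfolding maxwellian_def by simp
qed

lemma maxwellian_has_real_derivative_mass:
  assumes "(AX has_real_derivative a) (at X)"
  shows "((\<lambda>Y. maxwellian c (AX Y) U \<xi>) has_real_derivative a / c * chi ((\<xi> - U) / c)) (at X)"
  unfolding maxwellian_def divide_inverse[of "AX _"] divide_inverse[of a]
  using assms by (auto intro!: derivative_eq_intros)

lemma still_water_balance:
  fixes AX ZX :: "real \<Rightarrow> real"
  assumes "c \<noteq> 0" "g \<noteq> 0"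
    and "\<And>X. AX X > 0" "\<And>X. AX differentiable (at X)"
    and "\<And>X. c\<^sup>2 * ln (AX X) + g * ZX X = K"
  shows "\<xi> * deriv (\<lambda>Y. maxwellian c (AX Y) 0 \<xi>) X
          - g * deriv ZX X * deriv (\<lambda>\<eta>. maxwellian c (AX X) 0 \<eta>) \<xi> = 0"
proof -
  define a where "a = deriv AX X"
  have dA: "(AX has_real_derivative a) (at X)"
    using assms(4) a_def DERIV_deriv_iff_real_differentiable by blast
  have "ZX Y = (K - c\<^sup>2 * ln (AX Y)) / g" for Y
    using assms(2) assms(5)[of Y] by (simp add: eq_divide_eq algebra_simps)
  then have "ZX = (\<lambda>Y. (K - c\<^sup>2 * ln (AX Y)) / g)" ..
  then have dZ: "(ZX has_real_derivative - c\<^sup>2 * (a / AX X) / g) (at X)"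
    using assms(2,3) by (auto intro!: derivative_eq_intros dA)
  show ?thesis
    unfolding DERIV_imp_deriv[OF maxwellian_has_real_derivative_mass[OF dA]]
      DERIV_imp_deriv[OF dZ] DERIV_imp_deriv[OF maxwellian_has_real_derivative_velocity[OF assms(1)]]
    using assms(1,2) assms(3)[of X] unfolding maxwellian_def by (simp add: field_simps power2_eq_square)
qed

theorem theorem3:
  fixes c g A Q Z :: real
  assumes "c > 0" and "g > 0" and "A > 0"
  defines "U \<equiv> Q / A"
  shows
    "((\<forall>\<xi>. maxwellian c A U \<xi> > 0)
      \<and> integrable lborel (maxwellian c A U)
      \<and> integrable lborel (\<lambda>\<xi>. \<xi> * maxwellian c A U \<xi>)
      \<and> integrable lborel (energy_density c g Z (maxwellian c A U))
      \<and> (\<integral>\<xi>. maxwellian c A U \<xi> \<partial>lborel) = A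
      \<and> (\<integral>\<xi>. \<xi> * maxwellian c A U \<xi> \<partial>lborel) = Q)
     \<and> (\<forall>f :: real \<Rightarrow> real.
          (\<forall>\<xi>. f \<xi> > 0)
          \<and> integrable lborel f
          \<and> integrable lborel (\<lambda>\<xi>. \<xi> * f \<xi>)
          \<and> integrable lborel (energy_density c g Z f)
          \<and> (\<integral>\<xi>. f \<xi> \<partial>lborel) = A
          \<and> (\<integral>\<xi>. \<xi> * f \<xi> \<partial>lborel) = Q
          \<longrightarrow> energy c g Z (maxwellian c A U) \<le> energy c g Z f)
     \<and> energy c g Z (maxwellian c A U) = Q\<^sup>2 / (2 * A) + c\<^sup>2 * A * ln A + g * A * Z
     \<and> (\<forall>(AX :: real \<Rightarrow> real) (ZX :: real \<Rightarrow> real).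
          (\<forall>X. AX X > 0) \<and> (\<forall>X. AX differentiable (at X)) \<and> (\<forall>X. ZX differentiable (at X))
          \<and> (\<exists>K. \<forall>X. c\<^sup>2 * ln (AX X) + g * ZX X = K)
          \<longrightarrow> (\<forall>X \<xi>. \<xi> * deriv (\<lambda>Y. maxwellian c (AX Y) 0 \<xi>) X
                      - g * deriv ZX X * deriv (\<lambda>\<eta>. maxwellian c (AX X) 0 \<eta>) \<xi> = 0))"
proof -
  have "c \<noteq> 0" "g \<noteq> 0" and Q: "Q = A * U"
    using assms(1-3) unfolding U_def by simp_all
  have "(\<forall>\<xi>. maxwellian c A U \<xi> > 0)
      \<and> integrable lborel (maxwellian c A U)
      \<and> integrable lborel (\<lambda>\<xi>. \<xi> * maxwellian c A U \<xi>)
      \<and> integrable lborel (energy_density c g Z (maxwellian c A U))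
      \<and> (\<integral>\<xi>. maxwellian c A U \<xi> \<partial>lborel) = A
      \<and> (\<integral>\<xi>. \<xi> * maxwellian c A U \<xi> \<partial>lborel) = Q"
    unfolding Q
    using maxwellian_pos[OF assms(1,3)] energy_maxwellian(1)[OF assms(1,3)]
      integrable_maxwellian[OF assms(1)] integral_maxwellian[OF assms(1)]
      integrable_maxwellian_moment_1[OF assms(1)] integral_maxwellian_moment_1[OF assms(1)]
    by simp
  moreover have "energy c g Z (maxwellian c A U) \<le> energy c g Z f"
    if "(\<forall>\<xi>. f \<xi> > 0) \<and> integrable lborel f \<and> integrable lborel (\<lambda>\<xi>. \<xi> * f \<xi>)
      \<and> integrable lborel (energy_density c g Z f)
      \<and> (\<integral>\<xi>. f \<xi> \<partial>lborel) = A \<and> (\<integral>\<xi>. \<xi> * f \<xi> \<partial>lborel) = Q" for f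
    using that unfolding Q by (intro energy_maxwellian_le[OF assms(1,3)]) simp_all
  moreover have "energy c g Z (maxwellian c A U) = Q\<^sup>2 / (2 * A) + c\<^sup>2 * A * ln A + g * A * Z"
    unfolding energy_maxwellian(2)[OF assms(1,3)] Q
    using assms(3) by (simp add: field_simps power2_eq_square)
  moreover have "\<xi> * deriv (\<lambda>Y. maxwellian c (AX Y) 0 \<xi>) X
      - g * deriv ZX X * deriv (\<lambda>\<eta>. maxwellian c (AX X) 0 \<eta>) \<xi> = 0"
    if "\<forall>X. AX X > 0" "\<forall>X. AX differentiable (at X)" "\<forall>X. c\<^sup>2 * ln (AX X) + g * ZX X = K"
    for AX ZX :: "real \<Rightarrow> real" and K X \<xi>
    using that by (intro still_water_balance[OF \<open>c \<noteq> 0\<close> \<open>g \<noteq> 0\<close>]) simp_all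
  ultimately show ?thesis
    by blast
qed

end
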